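(* For all $m\geq 2$ and $k\ge 0$, $$H^k_{m,2}=\langle\mathcal{H}^{m}\oplus\mathcal{E}^{0}\rangle^k_{m,1}\quad\text{and}\quad E^k_{m,2}=\sum_{\ell=0}^{m-1}\langle\mathcal{H}^{\ell}\oplus\mathcal{E}^{m-\ell}\rangle^k_{m,1}+\sum_{\ell=0}^{m}\langle\mathcal{H}^{\ell}\oplus\mathcal{E}^{m-\ell}\rangle^{k-1}_{m,1}.$$
   Context: Power domination: for a graph $G=(V,E)$ and $S\subseteq V$, $\mathcal{P}^0(S)=N[S]$ and for $k\ge1$, $\mathcal{P}^k(S)=\mathcal{P}^{k-1}(S)\cup N^*(\mathcal{P}^{k-1}(S))$, where $x\in N^*(A)$ iff some $a\in A$ has $x$ as its only neighbor not in $A$; $\mathcal{P}^\infty(S)$ is the stable value, and $S$ is a power dominating set if $\mathcal{P}^\infty(S)=V$. $T_{m,h}$ is the complete $m$-ary tree of height $h$ rooted at $r$; $T^+_{m,h}$ is $T_{m,h}$ plus a new vertex $r'$ (stem) joined to $r$. For $G=T^+_{m,h}$, a set $S\subseteq V(G)\setminus\{r'\}$ is Type I if it is a power dominating set for $G$; Type II if it is not but $S\cup\{r'\}$ is; Type 0 otherwise. $E^k_{m,h}$ and $H^k_{m,h}$ denote the numbers of Type I and Type II sets of size $k$ for $T^+_{m,h}$ (zero for $k<0$). Define $$\langle\mathcal{H}^{\ell}\oplus\mathcal{E}^{m-\ell}\rangle^k_{m,h}=\sum \binom{m}{\ell}\binom{\ell}{s_0,\dots,s_k}\binom{m-\ell}{t_0,\dots,t_k}\Big(\prod_{j=1}^{\ell}H^{i_j}_{m,h}\Big)\Big(\prod_{j=\ell+1}^{m}E^{i_j}_{m,h}\Big),$$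 the sum over all tuples of nonnegative integers $(i_1,\dots,i_m)$ with $i_1\le\cdots\le i_\ell$, $i_{\ell+1}\le\cdots\le i_m$, and $i_1+\cdots+i_m=k$, where $s_\alpha=|\{j\in[\ell]:i_j=\alpha\}|$ and $t_\beta=|\{j\in[\ell+1,m]:i_j=\beta\}|$ (empty sum $=0$ for $k<0$). *)

theory Defs
  imports Main
begin

definition closed_nbhd :: "'a set \<Rightarrow> ('a \<Rightarrow> 'a \<Rightarrow> bool) \<Rightarrow> 'a set \<Rightarrow> 'a set" where
  "closed_nbhd V E S = S \<union> {x \<in> V. \<exists>s\<in>S. E s x}"

definition nstar :: "'a set \<Rightarrow> ('a \<Rightarrow> 'a \<Rightarrow> bool) \<Rightarrow> 'a set \<Rightarrow> 'a set" where
  "nstar V E A = {x \<in> V. \<exists>a\<in>A. {y \<in> V. E a y} - A = {x}}"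

definition pd_step :: "'a set \<Rightarrow> ('a \<Rightarrow> 'a \<Rightarrow> bool) \<Rightarrow> 'a set \<Rightarrow> 'a set" where
  "pd_step V E A = A \<union> nstar V E A"

definition pd_iter :: "'a set \<Rightarrow> ('a \<Rightarrow> 'a \<Rightarrow> bool) \<Rightarrow> 'a set \<Rightarrow> nat \<Rightarrow> 'a set" where
  "pd_iter V E S k = (pd_step V E ^^ k) (closed_nbhd V E S)"

definition pd_inf :: "'a set \<Rightarrow> ('a \<Rightarrow> 'a \<Rightarrow> bool) \<Rightarrow> 'a set \<Rightarrow> 'a set" where
  "pd_inf V E S = (\<Union>k. pd_iter V E S k)"

definition power_dominating :: "'a set \<Rightarrow> ('a \<Rightarrow> 'a \<Rightarrow> bool) \<Rightarrow> 'a set \<Rightarrow> bool" where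
  "power_dominating V E S \<longleftrightarrow> S \<subseteq> V \<and> pd_inf V E S = V"

text \<open>Vertices: None is the stem r'; Some xs is the tree vertex reached from the root r = Some []
  along the path xs (entries < m, length <= h).\<close>

definition tverts :: "nat \<Rightarrow> nat \<Rightarrow> nat list option set" where
  "tverts m h = insert None (Some ` {xs. length xs \<le> h \<and> set xs \<subseteq> {..<m}})"

definition tadj :: "nat \<Rightarrow> nat \<Rightarrow> nat list option \<Rightarrow> nat list option \<Rightarrow> bool" where
  "tadj m h u v \<longleftrightarrow>
     (u = None \<and> v = Some []) \<or> (u = Some [] \<and> v = None) \<or>
     (\<exists>xs i. i < m \<and> length xs < h \<and> set xs \<subseteq> {..<m} \<and>
        ((u = Some xs \<and> v = Some (xs @ [i])) \<or> (u = Some (xs @ [i]) \<and> v = Some xs)))"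

definition Ecount :: "nat \<Rightarrow> nat \<Rightarrow> nat \<Rightarrow> nat" where
  "Ecount m h k = card {S. S \<subseteq> tverts m h - {None} \<and> card S = k \<and>
                         power_dominating (tverts m h) (tadj m h) S}"

definition Hcount :: "nat \<Rightarrow> nat \<Rightarrow> nat \<Rightarrow> nat" where
  "Hcount m h k = card {S. S \<subseteq> tverts m h - {None} \<and> card S = k \<and>
                         \<not> power_dominating (tverts m h) (tadj m h) S \<and>
                         power_dominating (tverts m h) (tadj m h) (insert None S)}"

definition multinom :: "nat \<Rightarrow> (nat \<Rightarrow> nat) \<Rightarrow> nat \<Rightarrow> nat" where
  "multinom n s K = fact n div (\<Prod>a\<le>K. fact (s a))"

text \<open>Tuples (i_1,...,i_m) as lists of length m; the bound on entries is implied by the sum.\<close>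
definition bracket_tuples :: "nat \<Rightarrow> nat \<Rightarrow> int \<Rightarrow> nat list set" where
  "bracket_tuples m l k = {xs. length xs = m \<and> set xs \<subseteq> {0..nat k} \<and>
      sorted (take l xs) \<and> sorted (drop l xs) \<and> int (sum_list xs) = k}"

text \<open>bracket m h l k = < H^l (+) E^(m-l) >^k_{m,h}; zero (empty sum) for k < 0.\<close>
definition bracket :: "nat \<Rightarrow> nat \<Rightarrow> nat \<Rightarrow> int \<Rightarrow> nat" where
  "bracket m h l k = (\<Sum>xs\<in>bracket_tuples m l k.
      (m choose l)
      * multinom l (\<lambda>a. count_list (take l xs) a) (nat k)
      * multinom (m - l) (\<lambda>b. count_list (drop l xs) b) (nat k)
      * prod_list (map (Hcount m h) (take l xs))
      * prod_list (map (Ecount m h) (drop l xs)))"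

end

theory Submission
  imports Defs "HOL-Computational_Algebra.Polynomial" "HOL-Combinatorics.Multiset_Permutations"
begin

text \<open>Removing the stem \<open>r'\<close> from \<open>T^+_{m,2}\<close> leaves the root \<open>r\<close> and \<open>m\<close> branches, and branch \<open>j\<close>
  together with \<open>r\<close> is a copy of \<open>T^+_{m,1}\<close> in which \<open>r\<close> plays the stem. Once \<open>r\<close> is observed, a
  branch becomes fully observed iff its trace is of Type I or II for \<open>T^+_{m,1}\<close>, and a branch
  observes \<open>r\<close> by itself iff its trace is of Type I. Hence a set is of Type II for \<open>T^+_{m,2}\<close> iff
  it avoids \<open>r\<close> and every trace is of Type II, and it is of Type I iff every trace is of Type I or
  II and either \<open>r\<close> is chosen or some trace is of Type I. For the size generating polynomials
  \<open>H_h, E_h\<close> this says \<open>H_2 = H_1^m\<close> and \<open>E_2 + H_2 = (x + 1) (H_1 + E_1)^m\<close>. Expanding binomially,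
  the bracket is the coefficient of \<open>x^k\<close> in \<open>(m choose l) H_1^l E_1^(m-l)\<close>: the ordered tuples of
  block sizes contributing to that coefficient group into sorted tuples weighted by multinomial
  coefficients.\<close>

section \<open>Power domination on a finite graph\<close>

abbreviation nbhd :: "'a set \<Rightarrow> ('a \<Rightarrow> 'a \<Rightarrow> bool) \<Rightarrow> 'a \<Rightarrow> 'a set" where
  "nbhd V E a \<equiv> {y \<in> V. E a y}"

lemma pd_iter_Suc: "pd_iter V E S (Suc k) = pd_step V E (pd_iter V E S k)"
  by (simp add: pd_iter_def)

lemma pd_iter_mono: "k \<le> k' \<Longrightarrow> pd_iter V E S k \<subseteq> pd_iter V E S k'"
  by (rule lift_Suc_mono_le) (auto simp: pd_iter_Suc pd_step_def)

lemma pd_inf_least: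
  assumes "closed_nbhd V E S \<subseteq> A" and "nstar V E A \<subseteq> A"
  shows "pd_inf V E S \<subseteq> A"
proof -
  have "pd_iter V E S k \<subseteq> A" for k
  proof (induction k)
    case 0
    then show ?case using assms(1) by (simp add: pd_iter_def)
  next
    case (Suc k)
    have "x \<in> A" if "x \<in> nstar V E (pd_iter V E S k)" for x
    proof (rule ccontr)
      assume "x \<notin> A"
      obtain a where "a \<in> pd_iter V E S k" "x \<in> V" "nbhd V E a - pd_iter V E S k = {x}"
        using \<open>x \<in> nstar V E (pd_iter V E S k)\<close> unfolding nstar_def by blast
      with Suc.IH \<open>x \<notin> A\<close> have "x \<in> nstar V E A" unfolding nstar_def by blast
      with assms(2) \<open>x \<notin> A\<close> show False by blast
    qed
    with Suc.IH show ?case by (auto simp: pd_iter_Suc pd_step_def)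
  qed
  then show ?thesis by (auto simp: pd_inf_def)
qed

lemma closed_nbhd_subset_pd_inf: "closed_nbhd V E S \<subseteq> pd_inf V E S"
  unfolding pd_inf_def using pd_iter_def[of V E S 0] by auto

lemma pd_inf_memberI: "s \<in> S \<Longrightarrow> s \<in> pd_inf V E S"
  using closed_nbhd_subset_pd_inf[of V E S] unfolding closed_nbhd_def by blast

lemma pd_inf_neighbourI: "s \<in> S \<Longrightarrow> y \<in> V \<Longrightarrow> E s y \<Longrightarrow> y \<in> pd_inf V E S"
  using closed_nbhd_subset_pd_inf[of V E S] unfolding closed_nbhd_def by blast

lemma pd_inf_subset: "S \<subseteq> V \<Longrightarrow> pd_inf V E S \<subseteq> V"
  by (rule pd_inf_least) (auto simp: closed_nbhd_def nstar_def)

lemma power_dominatingI: "S \<subseteq> V \<Longrightarrow> V \<subseteq> pd_inf V E S \<Longrightarrow> power_dominating V E S"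
  unfolding power_dominating_def using pd_inf_subset[of S V E] by auto

lemma finite_subset_pd_iter:
  assumes "finite X" and "X \<subseteq> pd_inf V E S"
  shows "\<exists>k. X \<subseteq> pd_iter V E S k"
  using assms
proof (induction X rule: finite_induct)
  case (insert x X)
  then obtain k k' where "X \<subseteq> pd_iter V E S k" "x \<in> pd_iter V E S k'"
    by (auto simp: pd_inf_def)
  then have "insert x X \<subseteq> pd_iter V E S (max k k')"
    using pd_iter_mono[of k "max k k'" V E S] pd_iter_mono[of k' "max k k'" V E S] by auto
  then show ?case by blast
qed simp

text \<open>Finiteness lets \<open>a\<close> and its other neighbours be observed at a common stage of the iteration.\<close>
lemma pd_inf_force:
  assumes "finite V" "a \<in> pd_inf V E S" "x \<in> V" "E a x" "nbhd V E a - {x} \<subseteq> pd_inf V E S"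
  shows "x \<in> pd_inf V E S"
proof -
  obtain k where k: "insert a (nbhd V E a - {x}) \<subseteq> pd_iter V E S k"
    using finite_subset_pd_iter[of "insert a (nbhd V E a - {x})" V E S] assms by auto
  show ?thesis
  proof (cases "x \<in> pd_iter V E S k")
    case False
    with k assms(3,4) have "x \<in> nstar V E (pd_iter V E S k)" unfolding nstar_def by blast
    then have "x \<in> pd_iter V E S (Suc k)" by (simp add: pd_iter_Suc pd_step_def)
    then show ?thesis by (auto simp: pd_inf_def)
  qed (auto simp: pd_inf_def)
qed

lemma nstar_pd_inf_subset:
  assumes "finite V"
  shows "nstar V E (pd_inf V E S) \<subseteq> pd_inf V E S"
proof
  fix x assume "x \<in> nstar V E (pd_inf V E S)"
  then obtain a where "a \<in> pd_inf V E S" "x \<in> V" "nbhd V E a - pd_inf V E S = {x}"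
    unfolding nstar_def by blast
  then show "x \<in> pd_inf V E S" using pd_inf_force[OF assms] by blast
qed

lemma pd_inf_mono:
  assumes "finite V" and "S \<subseteq> S'"
  shows "pd_inf V E S \<subseteq> pd_inf V E S'"
proof (rule pd_inf_least)
  show "closed_nbhd V E S \<subseteq> pd_inf V E S'"
    using assms(2) closed_nbhd_subset_pd_inf[of V E S'] unfolding closed_nbhd_def by blast
qed (rule nstar_pd_inf_subset[OF assms(1)])

lemma power_dominating_mono:
  "finite V \<Longrightarrow> S \<subseteq> S' \<Longrightarrow> S' \<subseteq> V \<Longrightarrow> power_dominating V E S \<Longrightarrow> power_dominating V E S'"
  unfolding power_dominating_def using pd_inf_mono[of V S S' E] pd_inf_subset[of S' V E] by blast

text \<open>Whenever one of the leaves \<open>x, y\<close> is the only unobserved neighbour of a vertex, that vertex is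
  their common neighbour \<open>w\<close>, which also sees the other leaf; so \<open>V - {x, y}\<close> is closed under
  propagation.\<close>
lemma twin_leaves_not_power_dominating:
  assumes sym: "\<And>u v. E u v \<longleftrightarrow> E v u"
    and "x \<in> V" "y \<in> V" "x \<noteq> y" "x \<notin> S" "y \<notin> S" "w \<notin> S"
    and nx: "nbhd V E x = {w}" and ny: "nbhd V E y = {w}"
  shows "\<not> power_dominating V E S"
proof
  assume pd: "power_dominating V E S"
  have only_w: "s = w" if "s \<in> V" "E s z" "z \<in> {x, y}" for s z
    using that nx ny sym[of s z] by blast
  let ?A = "V - {x, y}"
  have "closed_nbhd V E S \<subseteq> ?A"
    using pd assms(5-7) only_w unfolding power_dominating_def closed_nbhd_def by blast
  moreover have "nstar V E ?A \<subseteq> ?A"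
  proof
    fix z assume "z \<in> nstar V E ?A"
    then obtain a where a: "a \<in> ?A" "nbhd V E a - ?A = {z}" unfolding nstar_def by blast
    show "z \<in> ?A"
    proof (rule ccontr)
      assume "z \<notin> ?A"
      with a have "a = w" using only_w by blast
      then have "{x, y} \<subseteq> nbhd V E a - ?A" using nx ny sym assms(2,3) by blast
      with a(2) have "x = z" "y = z" by auto
      with \<open>x \<noteq> y\<close> show False by simp
    qed
  qed
  ultimately have "pd_inf V E S \<subseteq> ?A" by (rule pd_inf_least)
  with pd \<open>x \<in> V\<close> show False unfolding power_dominating_def by blast
qed

section \<open>The stemmed trees of height one and two\<close>

text \<open>Keep the literal height \<open>1\<close>: otherwise simp rewrites \<open>tverts m 1\<close> to \<open>tverts m (Suc 0)\<close>, where the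
  rules below no longer apply.\<close>
declare One_nat_def [simp del]

lemma finite_tverts: "finite (tverts m h)"
  unfolding tverts_def using finite_lists_length_le[of "{..<m}" h] by (auto simp: conj_commute)

lemma tadj_sym: "tadj m h u v \<longleftrightarrow> tadj m h v u"
  unfolding tadj_def by blast

lemma tadj_None: "tadj m h None v \<longleftrightarrow> v = Some []" "tadj m h u None \<longleftrightarrow> u = Some []"
  unfolding tadj_def by auto

lemma tadj_Some_Some: "tadj m h (Some u) (Some v) \<longleftrightarrow>
   (length u < h \<and> set u \<subseteq> {..<m} \<and> (\<exists>i<m. v = u @ [i])) \<or>
   (length v < h \<and> set v \<subseteq> {..<m} \<and> (\<exists>i<m. u = v @ [i]))"
  unfolding tadj_def by auto

lemma tverts_height1: "tverts m 1 = {None, Some []} \<union> {Some [a] | a. a < m}"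
  unfolding tverts_def by (auto simp: le_Suc_eq length_Suc_conv One_nat_def)

lemma tverts_height2:
  "tverts m 2 = {None, Some []} \<union> {Some [j] | j. j < m} \<union> {Some [j, a] | j a. j < m \<and> a < m}"
  unfolding tverts_def numeral_2_eq_2 by (auto simp: le_Suc_eq length_Suc_conv)

lemma tverts_height1_memberI: "None \<in> tverts m 1" "Some [] \<in> tverts m 1" "a < m \<Longrightarrow> Some [a] \<in> tverts m 1"
  unfolding tverts_height1 by auto

lemma tverts_height2_memberI:
  "None \<in> tverts m 2" "Some [] \<in> tverts m 2" "j < m \<Longrightarrow> Some [j] \<in> tverts m 2"
  "j < m \<Longrightarrow> a < m \<Longrightarrow> Some [j, a] \<in> tverts m 2"
  unfolding tverts_height2 by auto

lemma nbhd_height1: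
  "nbhd (tverts m 1) (tadj m 1) None = {Some []}"
  "nbhd (tverts m 1) (tadj m 1) (Some []) = insert None {Some [a] | a. a < m}"
  "a < m \<Longrightarrow> nbhd (tverts m 1) (tadj m 1) (Some [a]) = {Some []}"
  unfolding tverts_height1 by (auto simp: tadj_None tadj_Some_Some)

lemma nbhd_height2:
  "nbhd (tverts m 2) (tadj m 2) None = {Some []}"
  "nbhd (tverts m 2) (tadj m 2) (Some []) = insert None {Some [j] | j. j < m}"
  "j < m \<Longrightarrow> nbhd (tverts m 2) (tadj m 2) (Some [j]) = insert (Some []) {Some [j, a] | a. a < m}"
  "j < m \<Longrightarrow> a < m \<Longrightarrow> nbhd (tverts m 2) (tadj m 2) (Some [j, a]) = {Some [j]}"
  unfolding tverts_height2 by (auto simp: tadj_None tadj_Some_Some)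

lemma tadj_height1:
  "tadj m 1 None (Some [])" "tadj m 1 (Some []) None"
  "a < m \<Longrightarrow> tadj m 1 (Some []) (Some [a])" "a < m \<Longrightarrow> tadj m 1 (Some [a]) (Some [])"
  using nbhd_height1[of m] nbhd_height1(3)[of a m] tverts_height1_memberI[of m] by auto

lemma tadj_height2:
  "tadj m 2 None (Some [])" "tadj m 2 (Some []) None"
  "j < m \<Longrightarrow> tadj m 2 (Some []) (Some [j])" "j < m \<Longrightarrow> tadj m 2 (Some [j]) (Some [])"
  "j < m \<Longrightarrow> a < m \<Longrightarrow> tadj m 2 (Some [j]) (Some [j, a])"
  "j < m \<Longrightarrow> a < m \<Longrightarrow> tadj m 2 (Some [j, a]) (Some [j])"
  using nbhd_height2[of m] nbhd_height2(3)[of j m] nbhd_height2(4)[of j m a] tverts_height2_memberI[of m]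
  by auto

definition typeI_sets :: "nat \<Rightarrow> nat \<Rightarrow> nat list option set set" where
  "typeI_sets m h = {S. S \<subseteq> tverts m h - {None} \<and> power_dominating (tverts m h) (tadj m h) S}"

definition typeII_sets :: "nat \<Rightarrow> nat \<Rightarrow> nat list option set set" where
  "typeII_sets m h = {S. S \<subseteq> tverts m h - {None} \<and> \<not> power_dominating (tverts m h) (tadj m h) S
     \<and> power_dominating (tverts m h) (tadj m h) (insert None S)}"

definition stem_pd_sets :: "nat \<Rightarrow> nat \<Rightarrow> nat list option set set" where
  "stem_pd_sets m h = {S. S \<subseteq> tverts m h - {None} \<and> power_dominating (tverts m h) (tadj m h) (insert None S)}"

lemma stem_pd_sets_eq: "stem_pd_sets m h = typeI_sets m h \<union> typeII_sets m h"
proof -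
  have "power_dominating (tverts m h) (tadj m h) (insert None S)"
    if "S \<subseteq> tverts m h" "power_dominating (tverts m h) (tadj m h) S" for S
    using power_dominating_mono[OF finite_tverts _ _ that(2)] that(1) by (auto simp: tverts_def)
  then show ?thesis unfolding stem_pd_sets_def typeI_sets_def typeII_sets_def by blast
qed

lemma typeI_typeII_disjoint: "typeI_sets m h \<inter> typeII_sets m h = {}"
  unfolding typeI_sets_def typeII_sets_def by blast

lemma power_dominating_height1_iff:
  assumes "m \<ge> 2" and S: "S \<subseteq> tverts m 1 - {None}"
  shows "power_dominating (tverts m 1) (tadj m 1) S \<longleftrightarrow> Some [] \<in> S \<or> (\<forall>a<m. Some [a] \<in> S)"
    (is "_ \<longleftrightarrow> ?root \<or> ?leaves")
proof
  assume pd: "power_dominating (tverts m 1) (tadj m 1) S"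
  show "?root \<or> ?leaves"
  proof (rule ccontr)
    assume "\<not> ?thesis"
    then obtain a where "a < m" "Some [a] \<notin> S" "Some [] \<notin> S" by auto
    then have "\<not> power_dominating (tverts m 1) (tadj m 1) S"
      using S by (intro twin_leaves_not_power_dominating[of "tadj m 1" None _ "Some [a]" _ "Some []",
          OF tadj_sym]) (auto simp: nbhd_height1 tverts_height1_memberI)
    with pd show False by simp
  qed
next
  let ?P = "pd_inf (tverts m 1) (tadj m 1) S"
  assume "?root \<or> ?leaves"
  then have root: "Some [] \<in> ?P" and leaves: "\<And>a. a < m \<Longrightarrow> Some [a] \<in> ?P"
    using \<open>m \<ge> 2\<close> pd_inf_neighbourI[of "Some [0]" S "Some []" "tverts m 1" "tadj m 1"]
      tadj_height1(4)[of 0 m] tverts_height1_memberI(2)[of m]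
    by (auto intro: pd_inf_memberI pd_inf_neighbourI tadj_height1 tverts_height1_memberI)
  have "None \<in> ?P"
    by (rule pd_inf_force[OF finite_tverts root])
      (use leaves in \<open>auto simp: nbhd_height1 tadj_height1 tverts_height1_memberI\<close>)
  with root leaves S show "power_dominating (tverts m 1) (tadj m 1) S"
    by (intro power_dominatingI) (auto simp: tverts_height1)
qed

lemma power_dominating_stem_height1_iff:
  assumes S: "S \<subseteq> tverts m 1 - {None}"
  shows "power_dominating (tverts m 1) (tadj m 1) (insert None S) \<longleftrightarrow>
     Some [] \<in> S \<or> (\<forall>a<m. \<forall>b<m. Some [a] \<notin> S \<longrightarrow> Some [b] \<notin> S \<longrightarrow> a = b)"
    (is "_ \<longleftrightarrow> ?root \<or> ?almost_all_leaves")
proof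
  assume pd: "power_dominating (tverts m 1) (tadj m 1) (insert None S)"
  show "?root \<or> ?almost_all_leaves"
  proof (rule ccontr)
    assume "\<not> ?thesis"
    then obtain a b where "a < m" "b < m" "a \<noteq> b" "Some [a] \<notin> S" "Some [b] \<notin> S" "Some [] \<notin> S"
      by auto
    then have "\<not> power_dominating (tverts m 1) (tadj m 1) (insert None S)"
      by (intro twin_leaves_not_power_dominating[of "tadj m 1" "Some [a]" _ "Some [b]" _ "Some []",
          OF tadj_sym]) (auto simp: nbhd_height1 tverts_height1_memberI)
    with pd show False by simp
  qed
next
  let ?S = "insert None S"
  let ?P = "pd_inf (tverts m 1) (tadj m 1) ?S"
  assume h: "?root \<or> ?almost_all_leaves"
  have root: "Some [] \<in> ?P"
    by (rule pd_inf_neighbourI[of None]) (auto simp: tverts_height1_memberI tadj_height1)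
  have stem: "None \<in> ?P" by (simp add: pd_inf_memberI)
  have leaf: "Some [a] \<in> ?P" if "a < m" for a
  proof (cases "Some [] \<in> S \<or> Some [a] \<in> S")
    case True
    with \<open>a < m\<close> show ?thesis
      by (auto intro: pd_inf_memberI pd_inf_neighbourI tadj_height1 tverts_height1_memberI)
  next
    case False
    then have "Some [b] \<in> ?P" if "b < m" "b \<noteq> a" for b
      using h that \<open>a < m\<close> by (auto intro: pd_inf_memberI)
    then show ?thesis
      by (intro pd_inf_force[OF finite_tverts root])
        (use stem \<open>a < m\<close> in \<open>auto simp: nbhd_height1 tadj_height1 tverts_height1_memberI\<close>)
  qed
  from root stem leaf S show "power_dominating (tverts m 1) (tadj m 1) ?S"
    by (intro power_dominatingI) (auto simp: tverts_height1)
qed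

text \<open>Via \<open>graft\<close> (below) these say that the trace on branch \<open>j\<close>, viewed in \<open>T^+_{m,1}\<close>, is power
  dominating once the stem is added, resp. on its own.\<close>
definition branch_stem_pd :: "nat \<Rightarrow> nat list option set \<Rightarrow> nat \<Rightarrow> bool" where
  "branch_stem_pd m S j \<longleftrightarrow>
     Some [j] \<in> S \<or> (\<forall>a<m. \<forall>b<m. Some [j, a] \<notin> S \<longrightarrow> Some [j, b] \<notin> S \<longrightarrow> a = b)"

definition branch_pd :: "nat \<Rightarrow> nat list option set \<Rightarrow> nat \<Rightarrow> bool" where
  "branch_pd m S j \<longleftrightarrow> Some [j] \<in> S \<or> (\<forall>a<m. Some [j, a] \<in> S)"

lemma branch_observed:
  assumes "m \<ge> 2" "j < m" and root: "Some [] \<in> pd_inf (tverts m 2) (tadj m 2) S"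
    and branch: "branch_stem_pd m S j"
  shows "Some [j] \<in> pd_inf (tverts m 2) (tadj m 2) S"
    and "a < m \<Longrightarrow> Some [j, a] \<in> pd_inf (tverts m 2) (tadj m 2) S"
proof -
  let ?P = "pd_inf (tverts m 2) (tadj m 2) S"
  show child: "Some [j] \<in> ?P"
  proof (cases "Some [j] \<in> S")
    case False
    moreover have "0 < m" "1 < m" using \<open>m \<ge> 2\<close> by auto
    ultimately obtain a where "a < m" "Some [j, a] \<in> S"
      using branch unfolding branch_stem_pd_def by (metis zero_neq_one)
    then show ?thesis
      by (intro pd_inf_neighbourI[of "Some [j, a]"]) (use \<open>j < m\<close> in \<open>auto intro: tadj_height2 tverts_height2_memberI\<close>)
  qed (rule pd_inf_memberI)
  assume "a < m"
  show "Some [j, a] \<in> ?P"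
  proof (cases "Some [j] \<in> S \<or> Some [j, a] \<in> S")
    case True
    with \<open>j < m\<close> \<open>a < m\<close> show ?thesis
      by (auto intro: pd_inf_memberI pd_inf_neighbourI tadj_height2 tverts_height2_memberI)
  next
    case False
    with branch \<open>a < m\<close> have "Some [j, b] \<in> ?P" if "b < m" "b \<noteq> a" for b
      using that unfolding branch_stem_pd_def by (auto intro: pd_inf_memberI)
    then show ?thesis
      by (intro pd_inf_force[OF finite_tverts child])
        (use root \<open>a < m\<close> \<open>j < m\<close> in \<open>auto simp: nbhd_height2 tadj_height2 tverts_height2_memberI\<close>)
  qed
qed

lemma not_power_dominating_if_not_branch_stem_pd:
  assumes "j < m" and "\<not> branch_stem_pd m S j"
  shows "\<not> power_dominating (tverts m 2) (tadj m 2) S"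
proof -
  obtain a b where "a < m" "b < m" "a \<noteq> b" "Some [j, a] \<notin> S" "Some [j, b] \<notin> S" "Some [j] \<notin> S"
    using assms(2) unfolding branch_stem_pd_def by auto
  with \<open>j < m\<close> show ?thesis
    by (intro twin_leaves_not_power_dominating[of "tadj m 2" "Some [j, a]" _ "Some [j, b]" _ "Some [j]",
          OF tadj_sym]) (auto simp: nbhd_height2 tverts_height2_memberI)
qed

lemma power_dominating_stem_height2_iff:
  assumes "m \<ge> 2" and S: "S \<subseteq> tverts m 2 - {None}"
  shows "power_dominating (tverts m 2) (tadj m 2) (insert None S) \<longleftrightarrow> (\<forall>j<m. branch_stem_pd m S j)"
proof
  assume "power_dominating (tverts m 2) (tadj m 2) (insert None S)"
  then show "\<forall>j<m. branch_stem_pd m S j"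
    using not_power_dominating_if_not_branch_stem_pd unfolding branch_stem_pd_def by blast
next
  let ?S = "insert None S"
  let ?P = "pd_inf (tverts m 2) (tadj m 2) ?S"
  assume "\<forall>j<m. branch_stem_pd m S j"
  then have "\<forall>j<m. branch_stem_pd m ?S j" unfolding branch_stem_pd_def by simp
  moreover have root: "Some [] \<in> ?P"
    by (rule pd_inf_neighbourI[of None]) (auto simp: tverts_height2_memberI tadj_height2)
  ultimately have "Some [j] \<in> ?P" "Some [j, a] \<in> ?P" if "j < m" "a < m" for j a
    using branch_observed[OF \<open>m \<ge> 2\<close>] that by blast+
  moreover have "None \<in> ?P" by (simp add: pd_inf_memberI)
  ultimately show "power_dominating (tverts m 2) (tadj m 2) ?S"
    using root S by (intro power_dominatingI) (auto simp: tverts_height2)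
qed

text \<open>If neither the root nor any branch on its own observes the root, then the vertices other than
  the stem, the root and the unchosen leaves already form a set closed under propagation.\<close>
lemma not_power_dominating_height2_if_root_unreached:
  assumes S: "S \<subseteq> tverts m 2 - {None}" and "Some [] \<notin> S" and no_branch: "\<forall>j<m. \<not> branch_pd m S j"
  shows "\<not> power_dominating (tverts m 2) (tadj m 2) S"
proof
  assume pd: "power_dominating (tverts m 2) (tadj m 2) S"
  let ?A = "tverts m 2 - {None, Some []} - {Some [j, a] | j a. Some [j, a] \<notin> S}"
  have child_notin: "Some [j] \<notin> S" and leaf_missing: "\<exists>a<m. Some [j, a] \<notin> S" if "j < m" for j
    using no_branch that unfolding branch_pd_def by auto
  have S_leaves: "s \<in> S \<Longrightarrow> \<exists>j<m. \<exists>a<m. s = Some [j, a]" for s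
    using S \<open>Some [] \<notin> S\<close> child_notin unfolding tverts_height2 by blast
  have "closed_nbhd (tverts m 2) (tadj m 2) S \<subseteq> ?A"
  proof
    fix z assume "z \<in> closed_nbhd (tverts m 2) (tadj m 2) S"
    then consider "z \<in> S" | s where "s \<in> S" "z \<in> nbhd (tverts m 2) (tadj m 2) s"
      unfolding closed_nbhd_def by blast
    then show "z \<in> ?A"
    proof cases
      case 1
      with S \<open>Some [] \<notin> S\<close> show ?thesis by blast
    next
      case 2
      with S_leaves obtain j a where "j < m" "a < m" "s = Some [j, a]" by blast
      with 2 child_notin show ?thesis by (auto simp: nbhd_height2 tverts_height2_memberI)
    qed
  qed
  moreover have "nstar (tverts m 2) (tadj m 2) ?A \<subseteq> ?A"
  proof
    fix z assume "z \<in> nstar (tverts m 2) (tadj m 2) ?A"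
    then obtain v where v: "v \<in> ?A" "nbhd (tverts m 2) (tadj m 2) v - ?A = {z}"
      unfolding nstar_def by blast
    then consider j where "j < m" "v = Some [j]" | j a where "j < m" "a < m" "v = Some [j, a]"
      unfolding tverts_height2 by blast
    then show "z \<in> ?A"
    proof cases
      case (1 j)
      then obtain a where "a < m" "Some [j, a] \<notin> S" using leaf_missing by blast
      with 1 have "{Some [], Some [j, a]} \<subseteq> nbhd (tverts m 2) (tadj m 2) v - ?A"
        by (auto simp: nbhd_height2)
      with v(2) show ?thesis by auto
    next
      case (2 j a)
      then have "nbhd (tverts m 2) (tadj m 2) v - ?A = {}"
        using child_notin by (auto simp: nbhd_height2 tverts_height2_memberI)
      with v(2) show ?thesis by auto
    qed
  qed
  ultimately have "pd_inf (tverts m 2) (tadj m 2) S \<subseteq> ?A" by (rule pd_inf_least)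
  with pd show False unfolding power_dominating_def using tverts_height2_memberI(2)[of m] by blast
qed

lemma power_dominating_height2_iff:
  assumes "m \<ge> 2" and S: "S \<subseteq> tverts m 2 - {None}"
  shows "power_dominating (tverts m 2) (tadj m 2) S \<longleftrightarrow>
    (\<forall>j<m. branch_stem_pd m S j) \<and> (Some [] \<in> S \<or> (\<exists>j<m. branch_pd m S j))"
proof
  assume "power_dominating (tverts m 2) (tadj m 2) S"
  then show "(\<forall>j<m. branch_stem_pd m S j) \<and> (Some [] \<in> S \<or> (\<exists>j<m. branch_pd m S j))"
    using not_power_dominating_if_not_branch_stem_pd not_power_dominating_height2_if_root_unreached[OF S]
    by blast
next
  let ?P = "pd_inf (tverts m 2) (tadj m 2) S"
  assume h: "(\<forall>j<m. branch_stem_pd m S j) \<and> (Some [] \<in> S \<or> (\<exists>j<m. branch_pd m S j))"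
  have root: "Some [] \<in> ?P"
  proof (cases "Some [] \<in> S")
    case False
    then obtain j where "j < m" "branch_pd m S j" using h by auto
    show ?thesis
    proof (cases "Some [j] \<in> S")
      case True
      with \<open>j < m\<close> show ?thesis
        by (intro pd_inf_neighbourI[of "Some [j]"]) (auto intro: tadj_height2 tverts_height2_memberI)
    next
      case False
      with \<open>branch_pd m S j\<close> have leaves: "\<forall>a<m. Some [j, a] \<in> S" unfolding branch_pd_def by blast
      with \<open>j < m\<close> \<open>m \<ge> 2\<close> have child: "Some [j] \<in> ?P"
        by (intro pd_inf_neighbourI[of "Some [j, 0]"]) (auto intro: tadj_height2 tverts_height2_memberI)
      from leaves \<open>j < m\<close> show ?thesis
        by (intro pd_inf_force[OF finite_tverts child])
          (auto intro: pd_inf_memberI simp: nbhd_height2 tadj_height2 tverts_height2_memberI)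
    qed
  qed (rule pd_inf_memberI)
  have "Some [j] \<in> ?P" "Some [j, a] \<in> ?P" if "j < m" "a < m" for j a
    using branch_observed[OF \<open>m \<ge> 2\<close> _ root] h that by blast+
  moreover have "None \<in> ?P"
    by (intro pd_inf_force[OF finite_tverts root])
      (use calculation in \<open>auto simp: nbhd_height2 tadj_height2 tverts_height2_memberI\<close>)
  ultimately show "power_dominating (tverts m 2) (tadj m 2) S"
    using root S by (intro power_dominatingI) (auto simp: tverts_height2)
qed

section \<open>Size generating polynomials of set families\<close>

definition size_gf :: "'a set set \<Rightarrow> nat poly" where
  "size_gf F = (\<Sum>S\<in>F. monom 1 (card S))"

lemma coeff_size_gf: "finite F \<Longrightarrow> coeff (size_gf F) k = card {S\<in>F. card S = k}"
  by (simp add: size_gf_def coeff_sum coeff_monom sum.If_cases Int_def)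

lemma size_gf_Un_disjoint:
  "finite A \<Longrightarrow> finite B \<Longrightarrow> A \<inter> B = {} \<Longrightarrow> size_gf (A \<union> B) = size_gf A + size_gf B"
  unfolding size_gf_def by (rule sum.union_disjoint)

lemma size_gf_empty_set: "size_gf {{}} = 1"
  by (simp add: size_gf_def monom_eq_1)

lemma size_gf_singleton_set: "size_gf {{x}} = monom 1 1"
  by (simp add: size_gf_def One_nat_def)

lemma size_gf_image:
  assumes "inj f"
  shows "size_gf ((`) f ` F) = size_gf F"
proof -
  have "inj_on ((`) f) F" using assms by (simp add: inj_on_def inj_image_eq_iff)
  then show ?thesis
    unfolding size_gf_def using assms by (simp add: sum.reindex card_image inj_on_subset)
qed

definition blockwise_sets :: "'i set \<Rightarrow> ('i \<Rightarrow> 'a set) \<Rightarrow> ('i \<Rightarrow> 'a set set) \<Rightarrow> 'a set set" where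
  "blockwise_sets J B F = {S. S \<subseteq> (\<Union>j\<in>J. B j) \<and> (\<forall>j\<in>J. S \<inter> B j \<in> F j)}"

lemma blockwise_sets_insert:
  assumes disj: "B j \<inter> (\<Union>i\<in>J. B i) = {}" and Fj: "F j \<subseteq> Pow (B j)"
  shows "bij_betw (\<lambda>(T, U). T \<union> U) (F j \<times> blockwise_sets J B F) (blockwise_sets (insert j J) B F)"
proof -
  have piece_j: "(T \<union> U) \<inter> B j = T" if "T \<in> F j" "U \<subseteq> (\<Union>i\<in>J. B i)" for T U
    using that disj Fj by blast
  have piece_i: "(T \<union> U) \<inter> B i = U \<inter> B i" if "T \<in> F j" "i \<in> J" for T U i
    using that disj Fj by blast
  have restrict: "S \<inter> (\<Union>i\<in>J. B i) \<inter> B i = S \<inter> B i" if "i \<in> J" for S i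
    using that by blast
  show ?thesis
    by (rule bij_betw_byWitness[where f' = "\<lambda>S. (S \<inter> B j, S \<inter> (\<Union>i\<in>J. B i))"])
      (use Fj disj in \<open>auto simp: blockwise_sets_def piece_j piece_i restrict\<close>)
qed

lemma size_gf_blockwise_sets:
  assumes "finite J" "\<forall>j\<in>J. finite (B j)" "disjoint_family_on B J" "\<forall>j\<in>J. F j \<subseteq> Pow (B j)"
  shows "size_gf (blockwise_sets J B F) = (\<Prod>j\<in>J. size_gf (F j))"
  using assms
proof (induction J rule: finite_induct)
  case empty
  have "blockwise_sets {} B F = {{}}" unfolding blockwise_sets_def by auto
  then show ?case by (simp add: size_gf_empty_set)
next
  case (insert j J)
  have disj: "B j \<inter> (\<Union>i\<in>J. B i) = {}"
    using insert.prems(2) insert.hyps(2) unfolding disjoint_family_on_def by fastforce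
  have IH: "size_gf (blockwise_sets J B F) = (\<Prod>j\<in>J. size_gf (F j))"
    using insert by (auto simp: disjoint_family_on_def)
  have card_Un: "card (T \<union> U) = card T + card U" if "T \<in> F j" "U \<in> blockwise_sets J B F" for T U
  proof (rule card_Un_disjoint)
    have "T \<subseteq> B j" "U \<subseteq> (\<Union>i\<in>J. B i)"
      using that insert.prems(3) by (auto simp: blockwise_sets_def)
    then show "finite T" "finite U" "T \<inter> U = {}"
      using insert disj by (auto intro: finite_subset)
  qed
  have "bij_betw (\<lambda>(T, U). T \<union> U) (F j \<times> blockwise_sets J B F) (blockwise_sets (insert j J) B F)"
    by (rule blockwise_sets_insert[OF disj]) (use insert.prems(3) in simp)
  from sum.reindex_bij_betw[OF this, where g = "\<lambda>S. monom 1 (card S)"]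
  have "size_gf (blockwise_sets (insert j J) B F)
      = (\<Sum>(T, U)\<in>F j \<times> blockwise_sets J B F. monom 1 (card (T \<union> U)))"
    unfolding size_gf_def case_prod_beta by (rule sym)
  also have "\<dots> = (\<Sum>(T, U)\<in>F j \<times> blockwise_sets J B F. monom 1 (card T) * monom 1 (card U))"
    by (rule sum.cong) (auto simp: card_Un mult_monom)
  also have "\<dots> = size_gf (F j) * size_gf (blockwise_sets J B F)"
    unfolding size_gf_def sum_product sum.cartesian_product by simp
  finally show ?case using IH insert.hyps by simp
qed

section \<open>Coefficients of powers and the bracket\<close>

lemma coeff_monom_1_1_mult:
  "coeff (monom 1 1 * (p :: 'a :: comm_semiring_1 poly)) k = (if k = 0 then 0 else coeff p (k - 1))"
  by (cases k) (simp_all add: coeff_monom_mult One_nat_def)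

definition weak_compositions :: "nat \<Rightarrow> nat \<Rightarrow> nat list set" where
  "weak_compositions n s = {xs. length xs = n \<and> sum_list xs = s}"

definition sorted_weak_compositions :: "nat \<Rightarrow> nat \<Rightarrow> nat list set" where
  "sorted_weak_compositions n s = {xs \<in> weak_compositions n s. sorted xs}"

lemma weak_compositions_bound: "xs \<in> weak_compositions n s \<Longrightarrow> set xs \<subseteq> {..s}"
  unfolding weak_compositions_def using member_le_sum_list by fastforce

lemma finite_weak_compositions: "finite (weak_compositions n s)"
proof (rule finite_subset)
  show "weak_compositions n s \<subseteq> {xs. set xs \<subseteq> {..s} \<and> length xs = n}"
    using weak_compositions_bound unfolding weak_compositions_def by auto
qed (rule finite_lists_length_eq, simp)

lemma finite_sorted_weak_compositions: "finite (sorted_weak_compositions n s)"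
  unfolding sorted_weak_compositions_def using finite_weak_compositions by auto

lemma weak_compositions_0: "weak_compositions 0 s = (if s = 0 then {[]} else {})"
  unfolding weak_compositions_def by auto

lemma weak_compositions_Suc:
  "weak_compositions (Suc n) s = (\<Union>i\<le>s. (#) i ` weak_compositions n (s - i))"
proof (intro equalityI subsetI)
  fix xs assume "xs \<in> weak_compositions (Suc n) s"
  then obtain i ys where "xs = i # ys" "length ys = n" "i + sum_list ys = s"
    unfolding weak_compositions_def by (cases xs) auto
  then show "xs \<in> (\<Union>i\<le>s. (#) i ` weak_compositions n (s - i))"
    unfolding weak_compositions_def by force
qed (auto simp: weak_compositions_def)

lemma coeff_power_weak_compositions:
  "coeff (p ^ n) s = (\<Sum>xs\<in>weak_compositions n s. prod_list (map (coeff p) xs))"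
proof (induction n arbitrary: s)
  case 0
  then show ?case by (auto simp: weak_compositions_0 coeff_1)
next
  case (Suc n)
  have "coeff (p ^ Suc n) s = (\<Sum>i\<le>s. coeff p i * coeff (p ^ n) (s - i))"
    by (simp add: coeff_mult)
  also have "\<dots> = (\<Sum>i\<le>s. \<Sum>xs\<in>(#) i ` weak_compositions n (s - i). prod_list (map (coeff p) xs))"
    by (simp add: Suc sum_distrib_left sum.reindex)
  also have "\<dots> = (\<Sum>xs\<in>weak_compositions (Suc n) s. prod_list (map (coeff p) xs))"
    unfolding weak_compositions_Suc
    by (rule sum.UNION_disjoint[symmetric]) (auto simp: finite_weak_compositions)
  finally show ?case .
qed

lemma weak_compositions_eq_UN_permutations:
  "weak_compositions n s = (\<Union>ys\<in>sorted_weak_compositions n s. permutations_of_multiset (mset ys))"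
proof (intro equalityI subsetI)
  fix xs assume xs: "xs \<in> weak_compositions n s"
  then have "sort xs \<in> sorted_weak_compositions n s"
    unfolding sorted_weak_compositions_def weak_compositions_def
    by (auto simp: sum_mset_sum_list[symmetric] length_sort)
  moreover have "xs \<in> permutations_of_multiset (mset (sort xs))"
    by (simp add: permutations_of_multisetI)
  ultimately show "xs \<in> (\<Union>ys\<in>sorted_weak_compositions n s. permutations_of_multiset (mset ys))"
    by blast
next
  fix xs assume "xs \<in> (\<Union>ys\<in>sorted_weak_compositions n s. permutations_of_multiset (mset ys))"
  then obtain ys where ys: "ys \<in> sorted_weak_compositions n s" "mset xs = mset ys"
    by (auto dest: permutations_of_multisetD)
  then have "length xs = length ys" "sum_list xs = sum_list ys"
    by (metis size_mset, metis sum_mset_sum_list)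
  with ys show "xs \<in> weak_compositions n s"
    unfolding sorted_weak_compositions_def weak_compositions_def by auto
qed

lemma sum_weak_compositions_sorted:
  "(\<Sum>xs\<in>weak_compositions n s. g (mset xs)) =
   (\<Sum>ys\<in>sorted_weak_compositions n s. card (permutations_of_multiset (mset ys)) * g (mset ys))"
proof -
  have "mset ys \<noteq> mset ys'"
    if "ys \<in> sorted_weak_compositions n s" "ys' \<in> sorted_weak_compositions n s" "ys \<noteq> ys'" for ys ys'
    using that properties_for_sort[of ys ys'] sorted_sort_id[of ys']
    unfolding sorted_weak_compositions_def by auto
  then have "(\<Sum>xs\<in>weak_compositions n s. g (mset xs)) =
      (\<Sum>ys\<in>sorted_weak_compositions n s. \<Sum>xs\<in>permutations_of_multiset (mset ys). g (mset xs))"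
    unfolding weak_compositions_eq_UN_permutations
    by (intro sum.UNION_disjoint finite_sorted_weak_compositions ballI finite_permutations_of_multiset)
      (auto simp: permutations_of_multiset_def)
  also have "\<dots> = (\<Sum>ys\<in>sorted_weak_compositions n s. card (permutations_of_multiset (mset ys)) * g (mset ys))"
    by (intro sum.cong refl) (simp add: permutations_of_multiset_def)
  finally show ?thesis .
qed

lemma multinom_eq_card_permutations:
  assumes "set ys \<subseteq> {..K}"
  shows "multinom (length ys) (count_list ys) K = card (permutations_of_multiset (mset ys))"
proof -
  have prod_eq: "(\<Prod>a\<le>K. fact (count_list ys a)) = (\<Prod>a\<in>set ys. fact (count_list ys a))"
    by (rule prod.mono_neutral_right) (use assms in \<open>auto simp: count_list_0_iff\<close>)
  show ?thesis
    unfolding multinom_def prod_eq by (simp add: card_permutations_of_multiset(1) count_mset)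
qed

lemma coeff_power_sorted_weak_compositions:
  assumes "s \<le> K"
  shows "coeff (p ^ n) s =
    (\<Sum>ys\<in>sorted_weak_compositions n s. multinom n (count_list ys) K * prod_list (map (coeff p) ys))"
proof -
  have prod_mset: "prod_list (map (coeff p) xs) = prod_mset (image_mset (coeff p) (mset xs))" for xs
    by (simp flip: prod_mset_prod_list)
  have multinom: "multinom n (count_list ys) K = card (permutations_of_multiset (mset ys))"
    if "ys \<in> sorted_weak_compositions n s" for ys
  proof -
    have "set ys \<subseteq> {..K}"
      using that weak_compositions_bound[of ys n s] assms unfolding sorted_weak_compositions_def by auto
    with that show ?thesis
      using multinom_eq_card_permutations
      unfolding sorted_weak_compositions_def weak_compositions_def by auto
  qed
  have "coeff (p ^ n) s = (\<Sum>xs\<in>weak_compositions n s. prod_mset (image_mset (coeff p) (mset xs)))"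
    unfolding coeff_power_weak_compositions prod_mset ..
  also have "\<dots> = (\<Sum>ys\<in>sorted_weak_compositions n s.
      card (permutations_of_multiset (mset ys)) * prod_mset (image_mset (coeff p) (mset ys)))"
    by (rule sum_weak_compositions_sorted)
  also have "\<dots> = (\<Sum>ys\<in>sorted_weak_compositions n s. multinom n (count_list ys) K * prod_list (map (coeff p) ys))"
    by (intro sum.cong refl) (simp add: multinom prod_mset)
  finally show ?thesis .
qed

lemma finite_typeI_sets: "finite (typeI_sets m h)"
  and finite_typeII_sets: "finite (typeII_sets m h)"
  using finite_tverts[of m h]
  by (auto simp: typeI_sets_def typeII_sets_def intro: finite_subset[of _ "Pow (tverts m h)"])

lemma Ecount_eq_coeff: "Ecount m h k = coeff (size_gf (typeI_sets m h)) k"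
  unfolding coeff_size_gf[OF finite_typeI_sets] unfolding Ecount_def typeI_sets_def
  by (rule arg_cong[where f = card]) auto

lemma Hcount_eq_coeff: "Hcount m h k = coeff (size_gf (typeII_sets m h)) k"
  unfolding coeff_size_gf[OF finite_typeII_sets] unfolding Hcount_def typeII_sets_def
  by (rule arg_cong[where f = card]) auto

lemma size_gf_stem_pd_sets:
  "size_gf (stem_pd_sets m h) = size_gf (typeII_sets m h) + size_gf (typeI_sets m h)"
  unfolding stem_pd_sets_eq
  by (simp add: size_gf_Un_disjoint finite_typeI_sets finite_typeII_sets typeI_typeII_disjoint add.commute)

lemma bracket_tuples_eq_append:
  assumes "l \<le> m"
  shows "bij_betw (\<lambda>(a, b). a @ b)
    (\<Union>i\<le>k. sorted_weak_compositions l i \<times> sorted_weak_compositions (m - l) (k - i))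
    (bracket_tuples m l (int k))"
proof (rule bij_betw_byWitness[where f' = "\<lambda>xs. (take l xs, drop l xs)"])
  show "(\<lambda>xs. (take l xs, drop l xs)) ` bracket_tuples m l (int k) \<subseteq>
      (\<Union>i\<le>k. sorted_weak_compositions l i \<times> sorted_weak_compositions (m - l) (k - i))"
  proof
    fix p assume "p \<in> (\<lambda>xs. (take l xs, drop l xs)) ` bracket_tuples m l (int k)"
    then obtain xs where "xs \<in> bracket_tuples m l (int k)" "p = (take l xs, drop l xs)" by blast
    then have "length xs = m" "sorted (take l xs)" "sorted (drop l xs)"
      "sum_list (take l xs) + sum_list (drop l xs) = k"
      unfolding bracket_tuples_def by (auto simp flip: sum_list_append)
    with assms \<open>p = _\<close> show "p \<in> (\<Union>i\<le>k. sorted_weak_compositions l i \<times> sorted_weak_compositions (m - l) (k - i))"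
      unfolding sorted_weak_compositions_def weak_compositions_def
      by (intro UN_I[of "sum_list (take l xs)"]) auto
  qed
  show "(\<lambda>(a, b). a @ b) `
      (\<Union>i\<le>k. sorted_weak_compositions l i \<times> sorted_weak_compositions (m - l) (k - i))
      \<subseteq> bracket_tuples m l (int k)"
  proof clarsimp
    fix a b i assume "i \<le> k" "a \<in> sorted_weak_compositions l i" "b \<in> sorted_weak_compositions (m - l) (k - i)"
    then have "length a = l" "length b = m - l" "sorted a" "sorted b" "sum_list (a @ b) = k"
      unfolding sorted_weak_compositions_def weak_compositions_def by auto
    moreover have "set (a @ b) \<subseteq> {0..k}"
      using member_le_sum_list[of _ "a @ b"] \<open>sum_list (a @ b) = k\<close> by fastforce
    ultimately show "a @ b \<in> bracket_tuples m l (int k)"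
      using assms unfolding bracket_tuples_def by auto
  qed
qed (auto simp: sorted_weak_compositions_def weak_compositions_def)

lemma bracket_eq_coeff:
  assumes "l \<le> m"
  shows "bracket m h l (int k) =
    (m choose l) * coeff (size_gf (typeII_sets m h) ^ l * size_gf (typeI_sets m h) ^ (m - l)) k"
proof -
  define P where "P = size_gf (typeII_sets m h)"
  define Q where "Q = size_gf (typeI_sets m h)"
  have coeffs: "Hcount m h = coeff P" "Ecount m h = coeff Q"
    by (simp_all add: fun_eq_iff P_def Q_def Hcount_eq_coeff Ecount_eq_coeff)
  define term_P where "term_P a = multinom l (count_list a) k * prod_list (map (coeff P) a)" for a
  define term_Q where "term_Q b = multinom (m - l) (count_list b) k * prod_list (map (coeff Q) b)" for b
  let ?A = "sorted_weak_compositions l" and ?B = "sorted_weak_compositions (m - l)"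
  have "bracket m h l (int k) = (\<Sum>xs\<in>bracket_tuples m l (int k).
      (m choose l) * (term_P (take l xs) * term_Q (drop l xs)))"
    unfolding bracket_def coeffs term_P_def term_Q_def by (simp add: ac_simps)
  also have "\<dots> = (\<Sum>(a, b)\<in>(\<Union>i\<le>k. ?A i \<times> ?B (k - i)). (m choose l) * (term_P a * term_Q b))"
    by (subst sum.reindex_bij_betw[OF bracket_tuples_eq_append[OF assms], symmetric])
      (auto intro!: sum.cong simp: sorted_weak_compositions_def weak_compositions_def)
  also have "\<dots> = (\<Sum>i\<le>k. \<Sum>(a, b)\<in>?A i \<times> ?B (k - i). (m choose l) * (term_P a * term_Q b))"
    by (intro sum.UNION_disjoint finite_atMost ballI finite_cartesian_product finite_sorted_weak_compositions)
      (auto simp: sorted_weak_compositions_def weak_compositions_def)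
  also have "\<dots> = (\<Sum>i\<le>k. (m choose l) * (\<Sum>(a, b)\<in>?A i \<times> ?B (k - i). term_P a * term_Q b))"
    by (simp add: sum_distrib_left case_prod_beta)
  also have "\<dots> = (\<Sum>i\<le>k. (m choose l) * ((\<Sum>a\<in>?A i. term_P a) * (\<Sum>b\<in>?B (k - i). term_Q b)))"
    by (simp only: sum_product sum.cartesian_product)
  also have "\<dots> = (\<Sum>i\<le>k. (m choose l) * (coeff (P ^ l) i * coeff (Q ^ (m - l)) (k - i)))"
    by (intro sum.cong refl)
      (simp add: term_P_def term_Q_def coeff_power_sorted_weak_compositions[of _ k])
  also have "\<dots> = (m choose l) * coeff (P ^ l * Q ^ (m - l)) k"
    by (simp add: coeff_mult sum_distrib_left)
  finally show ?thesis unfolding P_def Q_def .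
qed

lemma sum_bracket_eq_coeff:
  "(\<Sum>l\<le>m. bracket m h l (int k)) = coeff ((size_gf (typeII_sets m h) + size_gf (typeI_sets m h)) ^ m) k"
  by (simp add: binomial_ring coeff_sum bracket_eq_coeff of_nat_poly mult.assoc)

lemma bracket_neg: "bracket m h l (-1) = 0"
  unfolding bracket_def bracket_tuples_def by simp

section \<open>The height-two tree as a root with \<open>m\<close> grafted copies of the height-one tree\<close>

definition branch :: "nat \<Rightarrow> nat \<Rightarrow> nat list option set" where
  "branch m j = insert (Some [j]) {Some [j, a] | a. a < m}"

definition graft :: "nat \<Rightarrow> nat list option \<Rightarrow> nat list option" where
  "graft j = map_option (Cons j)"

lemma finite_branch: "finite (branch m j)"
proof -
  have "{Some [j, a] | a. a < m} = (\<lambda>a. Some [j, a]) ` {..<m}" by auto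
  then show ?thesis unfolding branch_def by auto
qed

lemma branch_stem_pd_Int_branch: "branch_stem_pd m (S \<inter> branch m j) j = branch_stem_pd m S j"
  unfolding branch_stem_pd_def branch_def by auto

lemma branch_pd_Int_branch: "branch_pd m (S \<inter> branch m j) j = branch_pd m S j"
  unfolding branch_pd_def branch_def by auto

lemma size_gf_height2_by_branches:
  assumes "R \<subseteq> Pow {Some []}" and "\<And>j. j < m \<Longrightarrow> F j \<subseteq> Pow (branch m j)"
    and "\<And>j. j < m \<Longrightarrow> size_gf (F j) = g"
  shows "size_gf {S. S \<subseteq> tverts m 2 - {None} \<and> S \<inter> {Some []} \<in> R \<and> (\<forall>j<m. S \<inter> branch m j \<in> F j)}
    = size_gf R * g ^ m"
proof -
  define J where "J = insert None (Some ` {..<m})"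
  define B where "B i = (case i of None \<Rightarrow> {Some []} | Some j \<Rightarrow> branch m j)" for i
  define G where "G i = (case i of None \<Rightarrow> R | Some j \<Rightarrow> F j)" for i
  have "(\<Union>i\<in>J. B i) = tverts m 2 - {None}"
    unfolding J_def B_def branch_def tverts_height2 by auto
  then have "{S. S \<subseteq> tverts m 2 - {None} \<and> S \<inter> {Some []} \<in> R \<and> (\<forall>j<m. S \<inter> branch m j \<in> F j)}
      = blockwise_sets J B G"
    unfolding blockwise_sets_def by (auto simp: J_def B_def G_def)
  also have "size_gf \<dots> = (\<Prod>i\<in>J. size_gf (G i))"
  proof (rule size_gf_blockwise_sets)
    show "disjoint_family_on B J"
      unfolding disjoint_family_on_def J_def B_def branch_def by auto
  qed (use assms(1,2) finite_branch in \<open>auto simp: J_def B_def G_def\<close>)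
  also have "\<dots> = size_gf R * (\<Prod>j<m. size_gf (F j))"
    by (simp add: J_def G_def prod.reindex)
  also have "\<dots> = size_gf R * g ^ m"
    using assms(3) by simp
  finally show ?thesis .
qed

lemma inj_graft: "inj (graft j)"
  unfolding graft_def by (simp add: option.inj_map)

lemma graft_image_mem:
  "Some [j] \<in> graft j ` S \<longleftrightarrow> Some [] \<in> S" "Some [j, a] \<in> graft j ` S \<longleftrightarrow> Some [a] \<in> S"
  using inj_image_mem_iff[OF inj_graft] by (metis graft_def option.map(2))+

lemma graft_image_tree1: "graft j ` (tverts m 1 - {None}) = branch m j"
proof -
  have "Some [j, a] = map_option (Cons j) (Some [a])" for a by simp
  then show ?thesis
    unfolding graft_def branch_def tverts_height1 by (auto intro: rev_image_eqI)
qed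

lemma branch_family_eq_graft_image:
  assumes F1: "F1 = {S. S \<subseteq> tverts m 1 - {None} \<and> Q (Some [] \<in> S) (\<lambda>a. Some [a] \<in> S)}"
    and F2: "F2 = {T. T \<subseteq> branch m j \<and> Q (Some [j] \<in> T) (\<lambda>a. Some [j, a] \<in> T)}"
  shows "F2 = (`) (graft j) ` F1"
proof (intro equalityI subsetI)
  fix T assume "T \<in> F2"
  then have T: "T \<subseteq> graft j ` (tverts m 1 - {None})" "Q (Some [j] \<in> T) (\<lambda>a. Some [j, a] \<in> T)"
    using F2 graft_image_tree1 by auto
  then obtain S where "S \<subseteq> tverts m 1 - {None}" "T = graft j ` S"
    by (meson subset_image_iff)
  moreover from T(2) this(2) have "Q (Some [] \<in> S) (\<lambda>a. Some [a] \<in> S)"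
    by (simp only: graft_image_mem)
  ultimately show "T \<in> (`) (graft j) ` F1"
    unfolding F1 by blast
next
  fix T assume "T \<in> (`) (graft j) ` F1"
  then obtain S where "S \<subseteq> tverts m 1 - {None}" "Q (Some [] \<in> S) (\<lambda>a. Some [a] \<in> S)" "T = graft j ` S"
    unfolding F1 by blast
  moreover from this(2,3) have "Q (Some [j] \<in> T) (\<lambda>a. Some [j, a] \<in> T)"
    by (simp only: graft_image_mem)
  ultimately show "T \<in> F2"
    unfolding F2 using graft_image_tree1 by blast
qed

lemma size_gf_branch_stem_pd:
  assumes "m \<ge> 2"
  shows "size_gf {T. T \<subseteq> branch m j \<and> branch_stem_pd m T j} = size_gf (stem_pd_sets m 1)"
proof -
  have "{T. T \<subseteq> branch m j \<and> branch_stem_pd m T j} = (`) (graft j) ` stem_pd_sets m 1"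
    by (rule branch_family_eq_graft_image[where Q = "\<lambda>r L. r \<or> (\<forall>a<m. \<forall>b<m. \<not> L a \<longrightarrow> \<not> L b \<longrightarrow> a = b)"])
      (auto simp: stem_pd_sets_def branch_stem_pd_def power_dominating_stem_height1_iff)
  then show ?thesis by (simp add: size_gf_image[OF inj_graft])
qed

lemma size_gf_branch_typeII:
  assumes "m \<ge> 2"
  shows "size_gf {T. T \<subseteq> branch m j \<and> branch_stem_pd m T j \<and> \<not> branch_pd m T j} = size_gf (typeII_sets m 1)"
proof -
  have "{T. T \<subseteq> branch m j \<and> branch_stem_pd m T j \<and> \<not> branch_pd m T j} = (`) (graft j) ` typeII_sets m 1"
    by (rule branch_family_eq_graft_image[where
          Q = "\<lambda>r L. \<not> (r \<or> (\<forall>a<m. L a)) \<and> (r \<or> (\<forall>a<m. \<forall>b<m. \<not> L a \<longrightarrow> \<not> L b \<longrightarrow> a = b))"])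
      (auto simp: typeII_sets_def branch_stem_pd_def branch_pd_def
        power_dominating_stem_height1_iff power_dominating_height1_iff[OF assms])
  then show ?thesis by (simp add: size_gf_image[OF inj_graft])
qed

lemma typeI_sets_height2_iff:
  assumes "m \<ge> 2"
  shows "S \<in> typeI_sets m 2 \<longleftrightarrow> S \<subseteq> tverts m 2 - {None} \<and>
    (\<forall>j<m. branch_stem_pd m S j) \<and> (Some [] \<in> S \<or> (\<exists>j<m. branch_pd m S j))"
  using power_dominating_height2_iff[OF assms] unfolding typeI_sets_def by blast

lemma typeII_sets_height2_iff:
  assumes "m \<ge> 2"
  shows "S \<in> typeII_sets m 2 \<longleftrightarrow> S \<subseteq> tverts m 2 - {None} \<and>
    Some [] \<notin> S \<and> (\<forall>j<m. branch_stem_pd m S j \<and> \<not> branch_pd m S j)"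
proof (cases "S \<subseteq> tverts m 2 - {None}")
  case True
  then show ?thesis
    unfolding typeII_sets_def mem_Collect_eq
      power_dominating_height2_iff[OF assms True] power_dominating_stem_height2_iff[OF assms True]
    by blast
qed (auto simp: typeII_sets_def)

lemma size_gf_typeII_height2:
  assumes "m \<ge> 2"
  shows "size_gf (typeII_sets m 2) = size_gf (typeII_sets m 1) ^ m"
proof -
  have "typeII_sets m 2 = {S. S \<subseteq> tverts m 2 - {None} \<and> S \<inter> {Some []} \<in> {{}} \<and>
      (\<forall>j<m. S \<inter> branch m j \<in> {T. T \<subseteq> branch m j \<and> branch_stem_pd m T j \<and> \<not> branch_pd m T j})}"
    by (auto simp: typeII_sets_height2_iff[OF assms] branch_stem_pd_Int_branch branch_pd_Int_branch)
  also have "size_gf \<dots> = size_gf {{} :: nat list option set} * size_gf (typeII_sets m 1) ^ m"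
    by (rule size_gf_height2_by_branches) (auto simp: size_gf_branch_typeII[OF assms])
  finally show ?thesis by (simp add: size_gf_empty_set)
qed

lemma size_gf_typeI_typeII_height2:
  assumes "m \<ge> 2"
  shows "size_gf (typeI_sets m 2) + size_gf (typeII_sets m 2) =
    (monom 1 1 + 1) * size_gf (stem_pd_sets m 1) ^ m"
proof -
  define with_root where "with_root R =
    {S. S \<subseteq> tverts m 2 - {None} \<and> S \<inter> {Some []} \<in> R \<and>
      (\<forall>j<m. S \<inter> branch m j \<in> {T. T \<subseteq> branch m j \<and> branch_stem_pd m T j})}" for R
  have with_root_iff: "S \<in> with_root R \<longleftrightarrow>
      S \<subseteq> tverts m 2 - {None} \<and> S \<inter> {Some []} \<in> R \<and> (\<forall>j<m. branch_stem_pd m S j)" for S R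
    by (simp add: with_root_def branch_stem_pd_Int_branch)
  have size_gf_with_root: "size_gf (with_root R) = size_gf R * size_gf (stem_pd_sets m 1) ^ m"
    if "R \<subseteq> Pow {Some []}" for R
    unfolding with_root_def
    by (rule size_gf_height2_by_branches) (use that in \<open>auto simp: size_gf_branch_stem_pd[OF assms]\<close>)
  have finite_with_root: "finite (with_root R)" for R
    using finite_tverts[of m 2] unfolding with_root_def
    by (auto intro: finite_subset[of _ "Pow (tverts m 2)"])
  define Y where "Y = {S \<in> with_root {{}}. \<exists>j<m. branch_pd m S j}"
  have "typeI_sets m 2 = with_root {{Some []}} \<union> Y"
    by (auto simp: typeI_sets_height2_iff[OF assms] with_root_iff Y_def)
  moreover have "with_root {{}} = Y \<union> typeII_sets m 2"
    by (auto simp: typeII_sets_height2_iff[OF assms] with_root_iff Y_def)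
  moreover have "with_root {{Some []}} \<inter> Y = {}" "Y \<inter> typeII_sets m 2 = {}"
    by (auto simp: typeII_sets_height2_iff[OF assms] with_root_iff Y_def)
  moreover have "finite Y" unfolding Y_def using finite_with_root by simp
  ultimately have "size_gf (typeI_sets m 2) + size_gf (typeII_sets m 2) =
      size_gf (with_root {{Some []}}) + size_gf (with_root {{}})"
    by (simp add: size_gf_Un_disjoint finite_with_root finite_typeII_sets add.assoc)
  also have "\<dots> = (monom 1 1 + 1) * size_gf (stem_pd_sets m 1) ^ m"
    by (simp add: size_gf_with_root size_gf_empty_set size_gf_singleton_set algebra_simps)
  finally show ?thesis .
qed

theorem mainTheorem6:
  fixes m k :: nat
  assumes "m \<ge> 2"
  shows "Hcount m 2 k = bracket m 1 m (int k) \<and>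
         Ecount m 2 k = (\<Sum>l<m. bracket m 1 l (int k)) + (\<Sum>l\<le>m. bracket m 1 l (int k - 1))"
proof
  let ?N = "size_gf (typeII_sets m 1) + size_gf (typeI_sets m 1)"
  have H: "Hcount m 2 n = bracket m 1 m (int n)" for n
    by (simp add: Hcount_eq_coeff bracket_eq_coeff size_gf_typeII_height2[OF assms])
  then show "Hcount m 2 k = bracket m 1 m (int k)" .
  have "Ecount m 2 k + Hcount m 2 k = coeff (monom 1 1 * ?N ^ m) k + coeff (?N ^ m) k"
    using size_gf_typeI_typeII_height2[OF assms]
    by (simp add: Ecount_eq_coeff Hcount_eq_coeff size_gf_stem_pd_sets distrib_right flip: coeff_add)
  also have "coeff (monom 1 1 * ?N ^ m) k = (\<Sum>l\<le>m. bracket m 1 l (int k - 1))"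
    by (cases k) (simp_all add: coeff_monom_1_1_mult sum_bracket_eq_coeff bracket_neg)
  also have "coeff (?N ^ m) k = (\<Sum>l<m. bracket m 1 l (int k)) + Hcount m 2 k"
    by (simp add: sum_bracket_eq_coeff[symmetric] H lessThan_Suc_atMost[symmetric])
  finally show "Ecount m 2 k = (\<Sum>l<m. bracket m 1 l (int k)) + (\<Sum>l\<le>m. bracket m 1 l (int k - 1))"
    by simp
qed

end
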